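(* If $H(P)\ge\sum_{i=1}^N\pi_i\frac{\beta_i^2}{2}$, then $\underline\zeta=0$. Otherwise, $\underline\zeta$ equals the optimal value of the convex optimization problem $$\text{minimize}_{\theta\in\Delta}\quad -\sum_{(i,j)\in E}\theta_{ij}\log P_{ij}+R(\theta)-2\sqrt{R(\theta)}\sqrt{H(\theta)},\qquad R(\theta):=\sum_{i=1}^N\overline\theta_i\frac{\beta_i^2}{2};$$ in particular, the objective of this problem is a convex function on the convex set $\Delta$.
   Context: $V=\{1,\dots,N\}$; $P$ row-stochastic irreducible aperiodic with stationary distribution $\pi>0$; $E=\{(i,j):P_{ij}>0\}$; $\beta\in\mathbb R^N$. $\Delta=\{\theta\in\mathbb R^{N\times N}:\theta_{ij}\ge0,\sum_{i,j}\theta_{ij}=1,\sum_j\theta_{ij}=\sum_j\theta_{ji}\forall i,\theta_{ij}=0\text{ if }(i,j)\notin E\}$, $\overline\theta=\theta\mathbf1$. $H(\theta)=-\sum\theta_{ij}\log(\theta_{ij}/\overline\theta_i)$, $D(\theta\|P)=\sum\theta_{ij}\log(\theta_{ij}/(\overline\theta_iP_{ij}))$ ($0\log0=0$). $H(P):=-\sum_{i,j}\pi_iP_{ij}\log P_{ij}$ (i.e., $H$ evaluated at $\theta_{ij}=\pi_iP_{ij}$). $J_\theta(\xi)=\sum_{i:\overline\theta_i>0}\xi_i^2/(2\overline\theta_i)$ if $\xi_i=0$ whenever $\overline\theta_i=0$, else $+\infty$. $\underline\zeta$ is the infimum of $D(\theta\|P)+\sum_{i:\overline\theta_i>0}\overline\theta_i(\beta_i-\xi_i/\overline\theta_i)^2/2$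 over $\theta\in\Delta$, $\xi\in\mathbb R^N$ subject to $H(\theta)\ge J_\theta(\xi)$. *)

theory Defs
  imports "HOL-Analysis.Analysis"
begin

text \<open>States are the elements of a finite type 'n (so N = CARD('n)); matrices are real^'n^'n.\<close>

fun mpow :: "real^'n^'n \<Rightarrow> nat \<Rightarrow> real^'n^'n" where
  "mpow P 0 = mat 1"
| "mpow P (Suc k) = P ** mpow P k"

definition row_stochastic :: "real^'n::finite^'n \<Rightarrow> bool" where
  "row_stochastic P \<longleftrightarrow> (\<forall>i j. P$i$j \<ge> 0) \<and> (\<forall>i. (\<Sum>j\<in>UNIV. P$i$j) = 1)"

definition irreducible_chain :: "real^'n::finite^'n \<Rightarrow> bool" where
  "irreducible_chain P \<longleftrightarrow> (\<forall>i j. \<exists>k>0. mpow P k $i$j > 0)"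

definition aperiodic_chain :: "real^'n::finite^'n \<Rightarrow> bool" where
  "aperiodic_chain P \<longleftrightarrow> (\<forall>i. Gcd {k. k > 0 \<and> mpow P k $i$i > 0} = 1)"

definition stationary :: "real^'n::finite^'n \<Rightarrow> real^'n \<Rightarrow> bool" where
  "stationary P \<pi> \<longleftrightarrow> (\<forall>i. \<pi>$i \<ge> 0) \<and> (\<Sum>i\<in>UNIV. \<pi>$i) = 1 \<and>
     (\<forall>j. (\<Sum>i\<in>UNIV. \<pi>$i * P$i$j) = \<pi>$j)"

definition Delta :: "real^'n::finite^'n \<Rightarrow> (real^'n^'n) set" where
  "Delta P = {\<theta>. (\<forall>i j. \<theta>$i$j \<ge> 0) \<and> (\<Sum>i\<in>UNIV. \<Sum>j\<in>UNIV. \<theta>$i$j) = 1 \<and>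
      (\<forall>i. (\<Sum>j\<in>UNIV. \<theta>$i$j) = (\<Sum>j\<in>UNIV. \<theta>$j$i)) \<and>
      (\<forall>i j. P$i$j \<le> 0 \<longrightarrow> \<theta>$i$j = 0)}"

definition tbar :: "real^'n::finite^'n \<Rightarrow> real^'n" where
  "tbar \<theta> = (\<chi> i. \<Sum>j\<in>UNIV. \<theta>$i$j)"

definition xlog :: "real \<Rightarrow> real \<Rightarrow> real" where
  "xlog x y = (if x = 0 then 0 else x * ln (x / y))"

definition Hent :: "real^'n::finite^'n \<Rightarrow> real" where
  "Hent \<theta> = - (\<Sum>i\<in>UNIV. \<Sum>j\<in>UNIV. xlog (\<theta>$i$j) (tbar \<theta> $ i))"

definition KL :: "real^'n::finite^'n \<Rightarrow> real^'n^'n \<Rightarrow> real" where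
  "KL \<theta> P = (\<Sum>i\<in>UNIV. \<Sum>j\<in>UNIV. xlog (\<theta>$i$j) (tbar \<theta> $ i * P$i$j))"

definition HP :: "real^'n::finite^'n \<Rightarrow> real^'n \<Rightarrow> real" where
  "HP P \<pi> = Hent (\<chi> i j. \<pi>$i * P$i$j)"

definition Jfun :: "real^'n::finite^'n \<Rightarrow> real^'n \<Rightarrow> ereal" where
  "Jfun \<theta> \<xi> = (if (\<forall>i. tbar \<theta> $ i = 0 \<longrightarrow> \<xi>$i = 0)
     then ereal (\<Sum>i\<in>{i. tbar \<theta> $ i > 0}. (\<xi>$i)\<^sup>2 / (2 * tbar \<theta> $ i))
     else \<infinity>)"

definition zeta_low :: "real^'n::finite^'n \<Rightarrow> real^'n \<Rightarrow> real" where
  "zeta_low P \<beta> = Inf {KL \<theta> P + (\<Sum>i\<in>{i. tbar \<theta> $ i > 0}.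
        tbar \<theta> $ i * (\<beta>$i - \<xi>$i / tbar \<theta> $ i)\<^sup>2 / 2)
      | \<theta> \<xi>. \<theta> \<in> Delta P \<and> Jfun \<theta> \<xi> \<le> ereal (Hent \<theta>)}"

definition Rfun :: "real^'n \<Rightarrow> real^'n::finite^'n \<Rightarrow> real" where
  "Rfun \<beta> \<theta> = (\<Sum>i\<in>UNIV. tbar \<theta> $ i * (\<beta>$i)\<^sup>2 / 2)"

definition obj :: "real^'n::finite^'n \<Rightarrow> real^'n \<Rightarrow> real^'n^'n \<Rightarrow> real" where
  "obj P \<beta> \<theta> = - (\<Sum>i\<in>UNIV. \<Sum>j\<in>{j. P$i$j > 0}. \<theta>$i$j * ln (P$i$j))
     + Rfun \<beta> \<theta> - 2 * sqrt (Rfun \<beta> \<theta>) * sqrt (Hent \<theta>)"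

end

theory Submission
  imports Defs
begin

text \<open>
  Write \<open>R\<close>, \<open>H\<close>, \<open>D\<close> for \<open>Rfun \<beta>\<close>, \<open>Hent\<close>, \<open>KL\<close>. Since \<open>D(\<theta>\<parallel>P) = -H(\<theta>) - \<Sum> \<theta>\<^sub>i\<^sub>j log P\<^sub>i\<^sub>j\<close>,
  the objective of the convex problem is \<open>D + (\<surd>R - \<surd>H)\<^sup>2\<close>. For fixed \<open>\<theta>\<close>, by Cauchy--Schwarz
  the quadratic penalty of any \<open>\<xi>\<close> with \<open>J\<^sub>\<theta>(\<xi>) \<le> H(\<theta>)\<close> is at least \<open>(\<surd>R - \<surd>H)\<^sup>2\<close> when
  \<open>H \<le> R\<close>, and the choice \<open>\<xi>\<^sub>i = c \<beta>\<^sub>i \<Sum>\<^sub>j \<theta>\<^sub>i\<^sub>j\<close> attains this bound for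
  \<open>c = \<surd>(H/R)\<close> and penalty \<open>0\<close> for \<open>c = 1\<close> when \<open>R \<le> H\<close>.
  The stationary edge measure \<open>\<pi>\<^sub>i P\<^sub>i\<^sub>j\<close> has \<open>D = 0\<close>; this gives \<open>\<underline>\<zeta> = 0\<close> when \<open>R \<le> H\<close> there.
  Otherwise a feasible \<open>\<theta>\<close> with \<open>R < H\<close> is moved towards the edge measure until \<open>R = H\<close>
  (intermediate value theorem) without increasing \<open>D\<close>, so both infima agree.
  Convexity of the objective follows from convexity of \<open>D\<close>, concavity of \<open>H\<close>, linearity of
  \<open>R\<close> and concavity of \<open>(a, b) \<mapsto> \<surd>a \<surd>b\<close>.
\<close>

lemma xlog_ge_tangent:
  assumes "a \<ge> 0" "b \<ge> 0" "a > 0 \<longrightarrow> b > 0" "r > 0"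
  shows "a * ln r + a - b * r \<le> xlog a b"
proof (cases "a = 0")
  case True
  thus ?thesis using assms by (simp add: xlog_def)
next
  case False
  hence a: "a > 0" and b: "b > 0" using assms by auto
  have "a * ln (b * r / a) \<le> a * (b * r / a - 1)"
    using a b assms(4) by (intro mult_left_mono ln_le_minus_one) auto
  also have "\<dots> = b * r - a" using a by (simp add: field_simps)
  finally have "a * ln (b * r / a) \<le> b * r - a" .
  moreover have "ln (b * r / a) = ln r - ln (a / b)"
    using a b assms(4) by (simp add: ln_div ln_mult)
  ultimately show ?thesis using False by (simp add: xlog_def algebra_simps)
qed

lemma xlog_ge_diff: "a \<ge> 0 \<Longrightarrow> b \<ge> 0 \<Longrightarrow> (a > 0 \<longrightarrow> b > 0) \<Longrightarrow> a - b \<le> xlog a b"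
  using xlog_ge_tangent[of a b 1] by simp

lemma xlog_nonpos: "0 \<le> a \<Longrightarrow> a \<le> b \<Longrightarrow> xlog a b \<le> 0"
  by (auto simp: xlog_def mult_nonneg_nonpos ln_le_zero_iff divide_le_eq_1)

lemma xlog_same [simp]: "xlog a a = 0"
  by (simp add: xlog_def)

lemma xlog_scale: "t \<ge> 0 \<Longrightarrow> xlog (t * a) (t * b) = t * xlog a b"
  by (cases "t = 0") (auto simp: xlog_def)

text \<open>Log-sum inequality: the tangent bound at the common ratio \<open>r = (a\<^sub>1 + a\<^sub>2) / (b\<^sub>1 + b\<^sub>2)\<close>.\<close>

lemma xlog_add_le:
  assumes "a1 \<ge> 0" "b1 \<ge> 0" "a1 > 0 \<longrightarrow> b1 > 0" "a2 \<ge> 0" "b2 \<ge> 0" "a2 > 0 \<longrightarrow> b2 > 0"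
  shows "xlog (a1 + a2) (b1 + b2) \<le> xlog a1 b1 + xlog a2 b2"
proof (cases "a1 + a2 = 0")
  case True
  hence "a1 = 0" "a2 = 0" using assms by auto
  thus ?thesis by (simp add: xlog_def)
next
  case False
  hence A: "a1 + a2 > 0" using assms by auto
  have B: "b1 + b2 > 0" using assms A by (cases "a1 > 0") auto
  define r where "r = (a1 + a2) / (b1 + b2)"
  have r: "r > 0" using A B by (simp add: r_def)
  have "(b1 + b2) * r = a1 + a2" using B by (simp add: r_def)
  hence "(a1 + a2) * ln r = (a1 * ln r + a1 - b1 * r) + (a2 * ln r + a2 - b2 * r)"
    by (simp add: algebra_simps)
  hence "xlog (a1 + a2) (b1 + b2) = (a1 * ln r + a1 - b1 * r) + (a2 * ln r + a2 - b2 * r)"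
    using False by (simp add: xlog_def r_def)
  also have "\<dots> \<le> xlog a1 b1 + xlog a2 b2"
    using xlog_ge_tangent[OF assms(1-3) r] xlog_ge_tangent[OF assms(4-6) r] by linarith
  finally show ?thesis .
qed

lemma xlog_convex:
  assumes "a1 \<ge> 0" "b1 \<ge> 0" "a1 > 0 \<longrightarrow> b1 > 0" "a2 \<ge> 0" "b2 \<ge> 0" "a2 > 0 \<longrightarrow> b2 > 0"
    and "u \<ge> 0" "v \<ge> 0"
  shows "xlog (u * a1 + v * a2) (u * b1 + v * b2) \<le> u * xlog a1 b1 + v * xlog a2 b2"
proof -
  have "xlog (u * a1 + v * a2) (u * b1 + v * b2) \<le> xlog (u * a1) (u * b1) + xlog (v * a2) (v * b2)"
    using assms by (intro xlog_add_le) (auto simp: zero_less_mult_iff)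
  thus ?thesis using assms by (simp add: xlog_scale)
qed

lemma continuous_on_xlog:
  assumes "continuous_on S a" "continuous_on S b"
    and "(\<forall>t\<in>S. a t > 0 \<and> b t > 0) \<or> (\<forall>t\<in>S. a t = 0)"
  shows "continuous_on S (\<lambda>t. xlog (a t) (b t))"
  using assms(3)
proof
  assume pos: "\<forall>t\<in>S. a t > 0 \<and> b t > 0"
  have "continuous_on S (\<lambda>t. a t * ln (a t / b t))"
    using pos assms(1,2) by (intro continuous_intros) auto
  thus ?thesis by (rule continuous_on_cong[THEN iffD1, rotated 2]) (use pos in \<open>auto simp: xlog_def\<close>)
next
  assume "\<forall>t\<in>S. a t = 0"
  thus ?thesis by (simp add: xlog_def cong: continuous_on_cong)
qed

lemma sqrt_mult_concave:
  fixes a1 a2 b1 b2 u v :: real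
  assumes "a1 \<ge> 0" "a2 \<ge> 0" "b1 \<ge> 0" "b2 \<ge> 0" "u \<ge> 0" "v \<ge> 0"
  shows "u * (sqrt a1 * sqrt b1) + v * (sqrt a2 * sqrt b2)
    \<le> sqrt (u * a1 + v * a2) * sqrt (u * b1 + v * b2)"
proof -
  define x1 x2 y1 y2 where "x1 = sqrt a1" "x2 = sqrt a2" "y1 = sqrt b1" "y2 = sqrt b2"
  have "(u * x1 * y1 + v * x2 * y2)\<^sup>2 + u * v * (x1 * y2 - x2 * y1)\<^sup>2
      = (u * x1\<^sup>2 + v * x2\<^sup>2) * (u * y1\<^sup>2 + v * y2\<^sup>2)"
    by (simp add: power2_eq_square algebra_simps)
  moreover have "u * v * (x1 * y2 - x2 * y1)\<^sup>2 \<ge> 0" using assms by simp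
  ultimately have "sqrt ((u * x1 * y1 + v * x2 * y2)\<^sup>2) \<le> sqrt ((u * x1\<^sup>2 + v * x2\<^sup>2) * (u * y1\<^sup>2 + v * y2\<^sup>2))"
    by (intro real_sqrt_le_mono) linarith
  thus ?thesis using assms by (simp add: x1_x2_y1_y2_def real_sqrt_mult mult.assoc)
qed

lemma Cauchy_Schwarz_ineq_sum_weighted:
  fixes w x y :: "'a \<Rightarrow> real"
  assumes "\<And>i. i \<in> I \<Longrightarrow> w i \<ge> 0"
  shows "(\<Sum>i\<in>I. w i * x i * y i)\<^sup>2 \<le> (\<Sum>i\<in>I. w i * (x i)\<^sup>2) * (\<Sum>i\<in>I. w i * (y i)\<^sup>2)"
proof -
  have "w i * x i * y i = (sqrt (w i) * x i) * (sqrt (w i) * y i)"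
    "w i * (x i)\<^sup>2 = (sqrt (w i) * x i)\<^sup>2" "w i * (y i)\<^sup>2 = (sqrt (w i) * y i)\<^sup>2" if "i \<in> I" for i
    using assms[OF that] by (simp_all add: power2_eq_square algebra_simps)
  hence "(\<Sum>i\<in>I. w i * x i * y i) = (\<Sum>i\<in>I. (sqrt (w i) * x i) * (sqrt (w i) * y i))"
    "(\<Sum>i\<in>I. w i * (x i)\<^sup>2) = (\<Sum>i\<in>I. (sqrt (w i) * x i)\<^sup>2)"
    "(\<Sum>i\<in>I. w i * (y i)\<^sup>2) = (\<Sum>i\<in>I. (sqrt (w i) * y i)\<^sup>2)"
    by (auto intro: sum.cong)
  thus ?thesis by (simp only: Cauchy_Schwarz_ineq_sum)
qed

lemma double_sum_le_comb:
  fixes f g h :: "'a \<Rightarrow> 'b \<Rightarrow> real"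
  assumes "\<And>i j. f i j \<le> u * g i j + v * h i j"
  shows "(\<Sum>i\<in>A. \<Sum>j\<in>B. f i j) \<le> u * (\<Sum>i\<in>A. \<Sum>j\<in>B. g i j) + v * (\<Sum>i\<in>A. \<Sum>j\<in>B. h i j)"
proof -
  have "(\<Sum>i\<in>A. \<Sum>j\<in>B. f i j) \<le> (\<Sum>i\<in>A. \<Sum>j\<in>B. u * g i j + v * h i j)"
    by (intro sum_mono assms)
  thus ?thesis by (simp add: sum.distrib sum_distrib_left)
qed

lemma cInf_eq_if_mutually_dominated:
  fixes A B :: "'a::conditionally_complete_linorder set"
  assumes "A \<noteq> {}" "B \<noteq> {}" "bdd_below A" "bdd_below B"
    and "\<And>a. a \<in> A \<Longrightarrow> \<exists>b\<in>B. b \<le> a" and "\<And>b. b \<in> B \<Longrightarrow> \<exists>a\<in>A. a \<le> b"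
  shows "Inf A = Inf B"
proof (rule antisym)
  show "Inf A \<le> Inf B"
  proof (rule cInf_greatest[OF assms(2)])
    fix b assume "b \<in> B"
    then obtain a where "a \<in> A" "a \<le> b" using assms(6) by blast
    thus "Inf A \<le> b" using cInf_lower[OF _ assms(3)] order_trans by blast
  qed
  show "Inf B \<le> Inf A"
  proof (rule cInf_greatest[OF assms(1)])
    fix a assume "a \<in> A"
    then obtain b where "b \<in> B" "b \<le> a" using assms(5) by blast
    thus "Inf B \<le> a" using cInf_lower[OF _ assms(4)] order_trans by blast
  qed
qed

definition expected_log :: "real^'n::finite^'n \<Rightarrow> real^'n^'n \<Rightarrow> real" where
  "expected_log P \<theta> = (\<Sum>i\<in>UNIV. \<Sum>j\<in>{j. P$i$j > 0}. \<theta>$i$j * ln (P$i$j))"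

lemma tbar_nth: "tbar \<theta> $ i = (\<Sum>j\<in>UNIV. \<theta>$i$j)"
  by (simp add: tbar_def)

lemma tbar_comb:
  "tbar (u *\<^sub>R x + v *\<^sub>R y) $ i = u * tbar x $ i + v * tbar (y::real^'n::finite^'n) $ i"
  by (simp add: tbar_def sum.distrib sum_distrib_left)

lemma Delta_nonneg: "\<theta> \<in> Delta P \<Longrightarrow> \<theta>$i$j \<ge> 0"
  by (simp add: Delta_def)

lemma Delta_le_tbar: "\<theta> \<in> Delta P \<Longrightarrow> \<theta>$i$j \<le> tbar \<theta> $ i"
  unfolding tbar_nth by (intro member_le_sum) (auto simp: Delta_def)

lemma Delta_tbar_nonneg: "\<theta> \<in> Delta P \<Longrightarrow> tbar \<theta> $ i \<ge> 0"
  using Delta_nonneg Delta_le_tbar order_trans by blast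

lemma Delta_zero_off_edges: "\<theta> \<in> Delta P \<Longrightarrow> P$i$j \<le> 0 \<Longrightarrow> \<theta>$i$j = 0"
  by (simp add: Delta_def)

lemma Delta_pos_imp:
  assumes "\<theta> \<in> Delta P" "\<theta>$i$j > 0"
  shows "tbar \<theta> $ i > 0" "P$i$j > 0"
proof -
  show "tbar \<theta> $ i > 0" using assms Delta_le_tbar[OF assms(1), of i j] by linarith
  show "P$i$j > 0" using assms Delta_zero_off_edges[OF assms(1), of i j] by force
qed

lemmas Delta_facts =
  Delta_nonneg Delta_le_tbar Delta_tbar_nonneg Delta_zero_off_edges Delta_pos_imp

lemma convex_Delta: "convex (Delta (P::real^'n::finite^'n))"
proof (rule convexI)
  fix x y :: "real^'n^'n" and u v :: real
  assume x: "x \<in> Delta P" and y: "y \<in> Delta P" and uv: "0 \<le> u" "0 \<le> v" "u + v = 1"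
  have "(\<Sum>j\<in>UNIV. (u *\<^sub>R x + v *\<^sub>R y)$i$j) = (\<Sum>j\<in>UNIV. (u *\<^sub>R x + v *\<^sub>R y)$j$i)" for i
    using x y by (simp add: Delta_def sum.distrib flip: sum_distrib_left)
  moreover have "(\<Sum>i\<in>UNIV. \<Sum>j\<in>UNIV. (u *\<^sub>R x + v *\<^sub>R y)$i$j)
     = u * (\<Sum>i\<in>UNIV. \<Sum>j\<in>UNIV. x$i$j) + v * (\<Sum>i\<in>UNIV. \<Sum>j\<in>UNIV. y$i$j)"
    by (simp add: sum.distrib sum_distrib_left)
  ultimately show "u *\<^sub>R x + v *\<^sub>R y \<in> Delta P"
    using x y uv unfolding Delta_def by auto
qed

lemma KL_convex:
  assumes x: "x \<in> Delta P" and y: "y \<in> Delta P" and uv: "0 \<le> u" "0 \<le> v"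
  shows "KL (u *\<^sub>R x + v *\<^sub>R y) P \<le> u * KL x P + v * KL y P"
  unfolding KL_def
proof (rule double_sum_le_comb)
  fix i j
  show "xlog ((u *\<^sub>R x + v *\<^sub>R y) $ i $ j) (tbar (u *\<^sub>R x + v *\<^sub>R y) $ i * P $ i $ j)
      \<le> u * xlog (x $ i $ j) (tbar x $ i * P $ i $ j) + v * xlog (y $ i $ j) (tbar y $ i * P $ i $ j)"
  proof (cases "P$i$j > 0")
    case False
    thus ?thesis using Delta_zero_off_edges[OF x] Delta_zero_off_edges[OF y] by (simp add: xlog_def)
  next
    case True
    have "tbar (u *\<^sub>R x + v *\<^sub>R y) $ i * P $ i $ j
        = u * (tbar x $ i * P $ i $ j) + v * (tbar y $ i * P $ i $ j)"
      by (simp add: tbar_comb algebra_simps)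
    thus ?thesis
      using True Delta_facts[OF x] Delta_facts[OF y] uv by (simp, intro xlog_convex) auto
  qed
qed

lemma Hent_concave:
  assumes x: "x \<in> Delta P" and y: "y \<in> Delta P" and uv: "0 \<le> u" "0 \<le> v"
  shows "u * Hent x + v * Hent y \<le> Hent (u *\<^sub>R x + v *\<^sub>R y)"
proof -
  have "(\<Sum>i\<in>UNIV. \<Sum>j\<in>UNIV. xlog ((u *\<^sub>R x + v *\<^sub>R y)$i$j) (tbar (u *\<^sub>R x + v *\<^sub>R y) $ i))
     \<le> u * (\<Sum>i\<in>UNIV. \<Sum>j\<in>UNIV. xlog (x$i$j) (tbar x $ i))
       + v * (\<Sum>i\<in>UNIV. \<Sum>j\<in>UNIV. xlog (y$i$j) (tbar y $ i))"
    unfolding tbar_comb using Delta_facts[OF x] Delta_facts[OF y] uv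
    by (intro double_sum_le_comb) (simp, intro xlog_convex, auto)
  thus ?thesis unfolding Hent_def by simp
qed

lemma Hent_nonneg: "x \<in> Delta P \<Longrightarrow> Hent x \<ge> 0"
  unfolding Hent_def by (simp add: sum_nonpos xlog_nonpos Delta_facts)

lemma Rfun_comb: "Rfun \<beta> (u *\<^sub>R x + v *\<^sub>R y) = u * Rfun \<beta> x + v * Rfun \<beta> y"
  by (simp add: Rfun_def tbar_comb add_divide_distrib sum.distrib sum_distrib_left algebra_simps)

lemma Rfun_nonneg: "x \<in> Delta P \<Longrightarrow> Rfun \<beta> x \<ge> 0"
  unfolding Rfun_def by (intro sum_nonneg divide_nonneg_nonneg mult_nonneg_nonneg) (auto simp: Delta_facts)

lemma expected_log_comb:
  "expected_log P (u *\<^sub>R x + v *\<^sub>R y) = u * expected_log P x + v * expected_log P y"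
  by (simp add: expected_log_def sum.distrib sum_distrib_left algebra_simps)

lemma KL_eq_neg_Hent_expected_log:
  assumes x: "x \<in> Delta P"
  shows "KL x P = - Hent x - expected_log P x"
proof -
  have "xlog (x$i$j) (tbar x $ i * P$i$j)
      = xlog (x$i$j) (tbar x $ i) - (if P$i$j > 0 then x$i$j * ln (P$i$j) else 0)" for i j
  proof (cases "x$i$j = 0")
    case True
    thus ?thesis by (simp add: xlog_def)
  next
    case False
    hence "x$i$j > 0" using Delta_nonneg[OF x, of i j] by auto
    hence "tbar x $ i > 0" "P$i$j > 0" using Delta_pos_imp[OF x] by auto
    thus ?thesis using False by (simp add: xlog_def ln_div ln_mult algebra_simps)
  qed
  thus ?thesis
    by (simp add: KL_def Hent_def expected_log_def sum_subtractf sum.If_cases)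
qed

lemma obj_eq_KL_plus_gap:
  assumes x: "x \<in> Delta P"
  shows "obj P \<beta> x = KL x P + (sqrt (Rfun \<beta> x) - sqrt (Hent x))\<^sup>2"
  using Rfun_nonneg[OF x] Hent_nonneg[OF x]
  by (simp add: obj_def KL_eq_neg_Hent_expected_log[OF x] expected_log_def
      power2_eq_square algebra_simps)

lemma KL_nonneg:
  assumes P: "row_stochastic P" and x: "x \<in> Delta P"
  shows "KL x P \<ge> 0"
proof -
  have "0 = (\<Sum>i\<in>UNIV. \<Sum>j\<in>UNIV. x$i$j) - (\<Sum>i\<in>UNIV. tbar x $ i * (\<Sum>j\<in>UNIV. P$i$j))"
    using P x by (simp add: row_stochastic_def Delta_def tbar_def)
  also have "\<dots> = (\<Sum>i\<in>UNIV. \<Sum>j\<in>UNIV. x$i$j - tbar x $ i * P$i$j)"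
    by (simp add: sum_subtractf sum_distrib_left)
  also have "\<dots> \<le> KL x P"
    unfolding KL_def using Delta_facts[OF x] P
    by (intro sum_mono xlog_ge_diff) (auto simp: zero_less_mult_iff row_stochastic_def)
  finally show ?thesis .
qed

lemma obj_nonneg: "row_stochastic P \<Longrightarrow> x \<in> Delta P \<Longrightarrow> obj P \<beta> x \<ge> 0"
  using obj_eq_KL_plus_gap KL_nonneg by (metis add_nonneg_nonneg zero_le_power2)

lemma convex_on_obj: "convex_on (Delta (P::real^'n::finite^'n)) (obj P \<beta>)"
  unfolding convex_on_def
proof (intro conjI convex_Delta ballI allI impI)
  fix x y :: "real^'n^'n" and u v :: real
  assume x: "x \<in> Delta P" and y: "y \<in> Delta P" and u: "0 \<le> u" and v: "0 \<le> v" and uv: "u + v = 1"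
  define m where "m = u *\<^sub>R x + v *\<^sub>R y"
  have "u * (sqrt (Rfun \<beta> x) * sqrt (Hent x)) + v * (sqrt (Rfun \<beta> y) * sqrt (Hent y))
      \<le> sqrt (Rfun \<beta> m) * sqrt (u * Hent x + v * Hent y)"
    unfolding m_def Rfun_comb using x y u v
    by (intro sqrt_mult_concave Rfun_nonneg Hent_nonneg)
  also have "\<dots> \<le> sqrt (Rfun \<beta> m) * sqrt (Hent m)"
    unfolding m_def Rfun_comb using Hent_concave[OF x y u v] Rfun_nonneg[OF x] Rfun_nonneg[OF y] u v
    by (intro mult_left_mono real_sqrt_le_mono) auto
  finally show "obj P \<beta> (u *\<^sub>R x + v *\<^sub>R y) \<le> u * obj P \<beta> x + v * obj P \<beta> y"
    unfolding obj_def expected_log_def[symmetric] m_def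
    by (simp add: expected_log_comb Rfun_comb algebra_simps)
qed

definition edge_measure :: "real^'n::finite^'n \<Rightarrow> real^'n \<Rightarrow> real^'n^'n" where
  "edge_measure P \<pi> = (\<chi> i j. \<pi>$i * P$i$j)"

lemma
  assumes P: "row_stochastic P" and st: "stationary P \<pi>"
  shows tbar_edge_measure: "tbar (edge_measure P \<pi>) = \<pi>"
    and edge_measure_in_Delta: "edge_measure P \<pi> \<in> Delta P"
    and KL_edge_measure: "KL (edge_measure P \<pi>) P = 0"
proof -
  have Pn: "P$i$j \<ge> 0" and Ps: "(\<Sum>j\<in>UNIV. P$i$j) = 1" for i j
    using P by (simp_all add: row_stochastic_def)
  have pn: "\<pi>$i \<ge> 0" for i using st by (simp add: stationary_def)
  show tb: "tbar (edge_measure P \<pi>) = \<pi>"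
    by (simp add: vec_eq_iff tbar_def edge_measure_def Ps flip: sum_distrib_left)
  show "edge_measure P \<pi> \<in> Delta P"
    using st Pn pn unfolding Delta_def edge_measure_def stationary_def
    by (simp add: Ps antisym flip: sum_distrib_left)
  show "KL (edge_measure P \<pi>) P = 0"
    unfolding KL_def tb by (simp add: edge_measure_def)
qed

lemma Hent_edge_measure: "Hent (edge_measure P \<pi>) = HP P \<pi>"
  by (simp add: HP_def edge_measure_def)

lemma Rfun_edge_measure:
  "row_stochastic P \<Longrightarrow> stationary P \<pi> \<Longrightarrow>
    Rfun \<beta> (edge_measure P \<pi>) = (\<Sum>i\<in>UNIV. \<pi>$i * (\<beta>$i)\<^sup>2 / 2)"
  by (simp add: Rfun_def tbar_edge_measure)

text \<open>
  On a segment starting at a point that charges every edge, each entry is either identically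
  zero or positive before the end point, so every term of \<open>H\<close> is continuous there.
\<close>

lemma continuous_on_Hent_segment:
  assumes x: "x \<in> Delta P" and y: "y \<in> Delta P" and y_pos: "\<And>i j. P$i$j > 0 \<Longrightarrow> y$i$j > 0"
  shows "continuous_on {0..<1} (\<lambda>t. Hent ((1 - t) *\<^sub>R y + t *\<^sub>R x))"
proof -
  have "continuous_on {0..<1} (\<lambda>t. - (\<Sum>i\<in>UNIV. \<Sum>j\<in>UNIV.
      xlog ((1 - t) * y$i$j + t * x$i$j) ((1 - t) * tbar y $ i + t * tbar x $ i)))"
  proof (intro continuous_on_minus continuous_on_sum continuous_on_xlog continuous_intros)
    fix i j
    show "(\<forall>t\<in>{0..<1}. 0 < (1 - t) * y$i$j + t * x$i$j \<and> 0 < (1 - t) * tbar y $ i + t * tbar x $ i)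
        \<or> (\<forall>t\<in>{0..<1}. (1 - t) * y$i$j + t * x$i$j = 0)"
    proof (cases "P$i$j > 0")
      case True
      have "0 < (1 - t) * y$i$j + t * x$i$j \<and> 0 < (1 - t) * tbar y $ i + t * tbar x $ i"
        if t: "t \<in> {0..<1}" for t
      proof -
        have "0 < (1 - t) * y$i$j + t * x$i$j"
          using t y_pos[OF True] Delta_nonneg[OF x, of i j] by (simp add: add_pos_nonneg)
        moreover have "(1 - t) * y$i$j + t * x$i$j \<le> (1 - t) * tbar y $ i + t * tbar x $ i"
          using t Delta_le_tbar[OF x] Delta_le_tbar[OF y] by (intro add_mono mult_left_mono) auto
        ultimately show ?thesis by linarith
      qed
      thus ?thesis by blast
    next
      case False
      thus ?thesis using Delta_zero_off_edges[OF x] Delta_zero_off_edges[OF y] by simp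
    qed
  qed
  thus ?thesis by (simp add: Hent_def tbar_comb)
qed

text \<open>
  On the segment from \<open>y\<close> to \<open>x\<close>, \<open>R - H\<close> is convex and changes sign, and \<open>KL\<close>, being convex
  and zero at \<open>y\<close>, stays below \<open>KL x P\<close>.
\<close>

lemma exists_balanced_point:
  fixes P :: "real^'n::finite^'n"
  assumes P: "row_stochastic P"
    and y: "y \<in> Delta P" "\<And>i j. P$i$j > 0 \<Longrightarrow> y$i$j > 0" "KL y P = 0" "Hent y < Rfun \<beta> y"
    and x: "x \<in> Delta P" "Rfun \<beta> x < Hent x"
  shows "\<exists>z\<in>Delta P. Rfun \<beta> z = Hent z \<and> KL z P \<le> KL x P"
proof -
  define seg where "seg t = (1 - t) *\<^sub>R y + t *\<^sub>R x" for t :: real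
  define \<phi> where "\<phi> t = Rfun \<beta> (seg t) - Hent (seg t)" for t
  have seg_Delta: "seg t \<in> Delta P" if "0 \<le> t" "t \<le> 1" for t
    using convex_Delta[of P] y(1) x(1) that unfolding convex_def seg_def by auto
  have R_seg: "Rfun \<beta> (seg t) = (1 - t) * Rfun \<beta> y + t * Rfun \<beta> x" for t
    by (simp add: seg_def Rfun_comb)
  have \<phi>0: "\<phi> 0 > 0" and \<phi>1: "\<phi> 1 < 0"
    using y(4) x(2) by (simp_all add: \<phi>_def seg_def)
  have \<phi>_le: "\<phi> t \<le> (1 - t) * \<phi> 0 + t * \<phi> 1" if "0 \<le> t" "t \<le> 1" for t
  proof -
    have "(1 - t) * Hent y + t * Hent x \<le> Hent (seg t)"
      unfolding seg_def using that by (intro Hent_concave[OF y(1) x(1)]) auto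
    thus ?thesis unfolding \<phi>_def R_seg by (simp add: seg_def algebra_simps)
  qed
  define t1 where "t1 = \<phi> 0 / (\<phi> 0 - \<phi> 1)"
  have t1: "0 < t1" "t1 < 1" using \<phi>0 \<phi>1 by (auto simp: t1_def field_simps)
  have "(1 - t1) * \<phi> 0 + t1 * \<phi> 1 = 0" using \<phi>0 \<phi>1 by (simp add: t1_def field_simps)
  hence "\<phi> t1 \<le> 0" using \<phi>_le[of t1] t1 by simp
  moreover have "continuous_on {0..t1} \<phi>"
  proof -
    have "continuous_on {0..t1} (\<lambda>t. Hent (seg t))"
      unfolding seg_def
      by (rule continuous_on_subset[OF continuous_on_Hent_segment[OF x(1) y(1,2)]]) (use t1 in auto)
    thus ?thesis unfolding \<phi>_def R_seg by (intro continuous_intros)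
  qed
  ultimately obtain t where t: "0 \<le> t" "t \<le> t1" "\<phi> t = 0"
    using IVT2'[of \<phi> t1 0 0] \<phi>0 t1 by auto
  have "KL (seg t) P \<le> (1 - t) * KL y P + t * KL x P"
    unfolding seg_def using t t1 by (intro KL_convex[OF y(1) x(1)]) auto
  also have "\<dots> \<le> KL x P"
    using y(3) KL_nonneg[OF P x(1)] t t1 by (simp add: mult_left_le_one_le)
  finally show ?thesis
    using seg_Delta[of t] t t1 by (intro bexI[of _ "seg t"]) (auto simp: \<phi>_def)
qed

definition quad_penalty :: "real^'n::finite^'n \<Rightarrow> real^'n \<Rightarrow> real^'n \<Rightarrow> real" where
  "quad_penalty \<theta> \<xi> \<beta> =
    (\<Sum>i\<in>{i. tbar \<theta> $ i > 0}. tbar \<theta> $ i * (\<beta>$i - \<xi>$i / tbar \<theta> $ i)\<^sup>2 / 2)"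

definition feasible_values :: "real^'n::finite^'n \<Rightarrow> real^'n \<Rightarrow> real set" where
  "feasible_values P \<beta> = {KL \<theta> P + quad_penalty \<theta> \<xi> \<beta> | \<theta> \<xi>.
     \<theta> \<in> Delta P \<and> Jfun \<theta> \<xi> \<le> ereal (Hent \<theta>)}"

lemma zeta_low_eq_Inf_feasible_values: "zeta_low P \<beta> = Inf (feasible_values P \<beta>)"
  by (simp add: zeta_low_def feasible_values_def quad_penalty_def)

lemma quad_penalty_nonneg: "quad_penalty \<theta> \<xi> \<beta> \<ge> 0"
  unfolding quad_penalty_def by (intro sum_nonneg) auto

lemma Rfun_eq_sum_charged:
  "x \<in> Delta P \<Longrightarrow> Rfun \<beta> x = (\<Sum>i\<in>{i. tbar x $ i > 0}. tbar x $ i / 2 * (\<beta>$i)\<^sup>2)"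
  unfolding Rfun_def
  by (rule sum.mono_neutral_cong_right) (use Delta_tbar_nonneg[of x P] in \<open>auto simp: order.order_iff_strict\<close>)

lemma Jfun_le_Hent_D:
  assumes "Jfun x \<xi> \<le> ereal (Hent x)"
  shows "(\<Sum>i\<in>{i. tbar x $ i > 0}. (\<xi>$i)\<^sup>2 / (2 * tbar x $ i)) \<le> Hent x"
  using assms by (auto simp: Jfun_def split: if_splits)

text \<open>
  On the states \<open>K\<close> with positive row sum \<open>t\<^sub>i\<close>, with weights \<open>w\<^sub>i = t\<^sub>i / 2\<close> and \<open>y\<^sub>i = \<xi>\<^sub>i / t\<^sub>i\<close>, the
  penalty is \<open>R - 2 \<Sum> w\<^sub>i \<beta>\<^sub>i y\<^sub>i + J\<close>, and Cauchy--Schwarz bounds the middle term by \<open>\<surd>R \<surd>J\<close>.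
\<close>

lemma quad_penalty_ge_gap:
  assumes x: "x \<in> Delta P" and J: "Jfun x \<xi> \<le> ereal (Hent x)" and HR: "Hent x \<le> Rfun \<beta> x"
  shows "(sqrt (Rfun \<beta> x) - sqrt (Hent x))\<^sup>2 \<le> quad_penalty x \<xi> \<beta>"
proof -
  define K where "K = {i. tbar x $ i > 0}"
  define w where "w i = tbar x $ i / 2" for i
  define y where "y i = \<xi>$i / tbar x $ i" for i
  define R where "R = Rfun \<beta> x"
  define Jv where "Jv = (\<Sum>i\<in>K. w i * (y i)\<^sup>2)"
  define C where "C = (\<Sum>i\<in>K. w i * \<beta>$i * y i)"
  have w: "\<And>i. i \<in> K \<Longrightarrow> w i \<ge> 0" by (auto simp: K_def w_def)
  have R: "R = (\<Sum>i\<in>K. w i * (\<beta>$i)\<^sup>2)"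
    unfolding R_def Rfun_eq_sum_charged[OF x] K_def w_def by simp
  have "Jv = (\<Sum>i\<in>K. (\<xi>$i)\<^sup>2 / (2 * tbar x $ i))"
    unfolding Jv_def by (intro sum.cong) (auto simp: K_def w_def y_def power2_eq_square)
  hence JH: "Jv \<le> Hent x" using Jfun_le_Hent_D[OF J] by (simp add: K_def)
  have J0: "Jv \<ge> 0" unfolding Jv_def using w by (intro sum_nonneg) auto
  have R0: "R \<ge> 0" using Rfun_nonneg[OF x] by (simp add: R_def)
  have "quad_penalty x \<xi> \<beta> = (\<Sum>i\<in>K. w i * (\<beta>$i)\<^sup>2 - 2 * (w i * \<beta>$i * y i) + w i * (y i)\<^sup>2)"
    unfolding quad_penalty_def K_def[symmetric]
    by (intro sum.cong) (auto simp: K_def w_def y_def power2_eq_square field_simps)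
  hence Q: "quad_penalty x \<xi> \<beta> = R - 2 * C + Jv"
    unfolding R Jv_def C_def by (simp add: sum.distrib sum_subtractf sum_distrib_left)
  have "C\<^sup>2 \<le> R * Jv" unfolding C_def R Jv_def by (rule Cauchy_Schwarz_ineq_sum_weighted) (rule w)
  hence "C \<le> sqrt R * sqrt Jv" using real_sqrt_le_mono by (fastforce simp: real_sqrt_mult)
  moreover have "(sqrt R - sqrt Jv)\<^sup>2 = R - 2 * (sqrt R * sqrt Jv) + Jv"
    using R0 J0 by (simp add: power2_eq_square algebra_simps)
  moreover have "(sqrt R - sqrt (Hent x))\<^sup>2 \<le> (sqrt R - sqrt Jv)\<^sup>2"
    using JH HR by (intro power_mono) (auto simp: R_def)
  ultimately show ?thesis using Q by (simp add: R_def)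
qed

lemma quad_penalty_attained:
  assumes x: "x \<in> Delta P"
  shows "\<exists>\<xi>. Jfun x \<xi> \<le> ereal (Hent x) \<and> quad_penalty x \<xi> \<beta> =
    (if Rfun \<beta> x \<le> Hent x then 0 else (sqrt (Rfun \<beta> x) - sqrt (Hent x))\<^sup>2)"
proof -
  define R where "R = Rfun \<beta> x"
  define H where "H = Hent x"
  define K where "K = {i. tbar x $ i > 0}"
  define c where "c = (if R \<le> H then 1 else sqrt H / sqrt R)"
  define \<xi> where "\<xi> = (\<chi> i. c * tbar x $ i * \<beta>$i)"
  have R0: "R \<ge> 0" using Rfun_nonneg[OF x] by (simp add: R_def)
  have H0: "H \<ge> 0" using Hent_nonneg[OF x] by (simp add: H_def)
  have RK: "R = (\<Sum>i\<in>K. tbar x $ i / 2 * (\<beta>$i)\<^sup>2)"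
    unfolding R_def K_def by (rule Rfun_eq_sum_charged[OF x])
  have "Jfun x \<xi> = ereal (\<Sum>i\<in>K. (\<xi>$i)\<^sup>2 / (2 * tbar x $ i))"
    by (simp add: Jfun_def K_def \<xi>_def)
  also have "(\<Sum>i\<in>K. (\<xi>$i)\<^sup>2 / (2 * tbar x $ i)) = c\<^sup>2 * R"
    unfolding RK sum_distrib_left
    by (intro sum.cong) (auto simp: K_def \<xi>_def power2_eq_square field_simps)
  finally have J: "Jfun x \<xi> = ereal (c\<^sup>2 * R)" .
  have Q: "quad_penalty x \<xi> \<beta> = (1 - c)\<^sup>2 * R"
    unfolding RK sum_distrib_left quad_penalty_def K_def[symmetric]
    by (intro sum.cong) (auto simp: K_def \<xi>_def power2_eq_square field_simps)
  show ?thesis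
  proof (cases "R \<le> H")
    case True
    thus ?thesis using J Q by (intro exI[of _ \<xi>]) (simp add: c_def R_def H_def)
  next
    case False
    hence "R > 0" using H0 by linarith
    hence "c\<^sup>2 * R = H" "(1 - c)\<^sup>2 * R = (sqrt R - sqrt H)\<^sup>2"
      using False H0 by (simp_all add: c_def power2_eq_square field_simps)
    thus ?thesis using J Q False by (intro exI[of _ \<xi>]) (simp add: R_def H_def)
  qed
qed

lemma feasible_values_nonneg: "row_stochastic P \<Longrightarrow> s \<in> feasible_values P \<beta> \<Longrightarrow> 0 \<le> s"
  unfolding feasible_values_def by (auto intro!: add_nonneg_nonneg KL_nonneg quad_penalty_nonneg)

lemma feasible_value_le_obj:
  assumes x: "x \<in> Delta P"
  shows "\<exists>s\<in>feasible_values P \<beta>. s \<le> obj P \<beta> x"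
proof -
  obtain \<xi> where \<xi>: "Jfun x \<xi> \<le> ereal (Hent x)"
    "quad_penalty x \<xi> \<beta> \<le> (sqrt (Rfun \<beta> x) - sqrt (Hent x))\<^sup>2"
    using quad_penalty_attained[OF x, of \<beta>] by (fastforce split: if_splits)
  hence "KL x P + quad_penalty x \<xi> \<beta> \<in> feasible_values P \<beta>"
    using x unfolding feasible_values_def by blast
  thus ?thesis using \<xi>(2) obj_eq_KL_plus_gap[OF x, of \<beta>] by (intro bexI) auto
qed

lemma obj_le_feasible_value:
  fixes P :: "real^'n::finite^'n"
  assumes P: "row_stochastic P" and st: "stationary P \<pi>" and pos: "\<forall>i. \<pi>$i > 0"
    and below: "HP P \<pi> < (\<Sum>i\<in>UNIV. \<pi>$i * (\<beta>$i)\<^sup>2 / 2)"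
    and s: "s \<in> feasible_values P \<beta>"
  shows "\<exists>y\<in>Delta P. obj P \<beta> y \<le> s"
proof -
  obtain \<theta> \<xi> where s_eq: "s = KL \<theta> P + quad_penalty \<theta> \<xi> \<beta>"
    and \<theta>: "\<theta> \<in> Delta P" and J: "Jfun \<theta> \<xi> \<le> ereal (Hent \<theta>)"
    using s unfolding feasible_values_def by blast
  show ?thesis
  proof (cases "Hent \<theta> \<le> Rfun \<beta> \<theta>")
    case True
    thus ?thesis
      using quad_penalty_ge_gap[OF \<theta> J True] obj_eq_KL_plus_gap[OF \<theta>, of \<beta>] s_eq \<theta>
      by (intro bexI[of _ \<theta>]) auto
  next
    case False
    have "edge_measure P \<pi> $ i $ j > 0" if "P$i$j > 0" for i j
      using pos that by (simp add: edge_measure_def)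
    then obtain y where y: "y \<in> Delta P" "Rfun \<beta> y = Hent y" "KL y P \<le> KL \<theta> P"
      using exists_balanced_point[where \<beta> = \<beta>, OF P edge_measure_in_Delta[OF P st] _ KL_edge_measure[OF P st] _ \<theta>]
        below False
      by (auto simp: Hent_edge_measure Rfun_edge_measure[OF P st])
    thus ?thesis using obj_eq_KL_plus_gap[OF y(1), of \<beta>] quad_penalty_nonneg[of \<theta> \<xi> \<beta>] s_eq
      by (intro bexI[of _ y]) auto
  qed
qed

theorem lemma10:
  fixes P :: "real^'n::finite^'n" and \<pi> :: "real^'n" and \<beta> :: "real^'n"
  assumes "row_stochastic P" and "irreducible_chain P" and "aperiodic_chain P"
    and "stationary P \<pi>" and "\<forall>i. \<pi>$i > 0"
  shows "(HP P \<pi> \<ge> (\<Sum>i\<in>UNIV. \<pi>$i * (\<beta>$i)\<^sup>2 / 2) \<longrightarrow> zeta_low P \<beta> = 0)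
     \<and> (HP P \<pi> < (\<Sum>i\<in>UNIV. \<pi>$i * (\<beta>$i)\<^sup>2 / 2) \<longrightarrow>
          zeta_low P \<beta> = Inf (obj P \<beta> ` Delta P))
     \<and> convex (Delta P) \<and> convex_on (Delta P) (obj P \<beta>)"
proof -
  note P = assms(1) and st = assms(4) and pos = assms(5)
  define \<theta>\<^sub>0 where "\<theta>\<^sub>0 = edge_measure P \<pi>"
  have \<theta>\<^sub>0: "\<theta>\<^sub>0 \<in> Delta P" "KL \<theta>\<^sub>0 P = 0"
    using edge_measure_in_Delta[OF P st] KL_edge_measure[OF P st] by (simp_all add: \<theta>\<^sub>0_def)
  have bdd: "bdd_below (feasible_values P \<beta>)" "bdd_below (obj P \<beta> ` Delta P)"
    using feasible_values_nonneg[OF P] obj_nonneg[OF P] by (auto intro: bdd_belowI[of _ 0])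
  have "zeta_low P \<beta> = 0" if "HP P \<pi> \<ge> (\<Sum>i\<in>UNIV. \<pi>$i * (\<beta>$i)\<^sup>2 / 2)"
  proof -
    have "Rfun \<beta> \<theta>\<^sub>0 \<le> Hent \<theta>\<^sub>0"
      using that by (simp add: \<theta>\<^sub>0_def Hent_edge_measure Rfun_edge_measure[OF P st])
    then obtain \<xi> where "Jfun \<theta>\<^sub>0 \<xi> \<le> ereal (Hent \<theta>\<^sub>0)" "quad_penalty \<theta>\<^sub>0 \<xi> \<beta> = 0"
      using quad_penalty_attained[OF \<theta>\<^sub>0(1), of \<beta>] by auto
    hence "0 \<in> feasible_values P \<beta>"
      unfolding feasible_values_def using \<theta>\<^sub>0 by force
    thus ?thesis unfolding zeta_low_eq_Inf_feasible_values
      using feasible_values_nonneg[OF P] by (intro cInf_eq_minimum) auto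
  qed
  moreover have "zeta_low P \<beta> = Inf (obj P \<beta> ` Delta P)"
    if "HP P \<pi> < (\<Sum>i\<in>UNIV. \<pi>$i * (\<beta>$i)\<^sup>2 / 2)"
    unfolding zeta_low_eq_Inf_feasible_values
    using \<theta>\<^sub>0(1) feasible_value_le_obj[OF \<theta>\<^sub>0(1), of \<beta>] bdd
      feasible_value_le_obj obj_le_feasible_value[OF P st pos that]
    by (intro cInf_eq_if_mutually_dominated) auto
  ultimately show ?thesis using convex_Delta convex_on_obj by auto
qed

end
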